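(* For every integer $n\ge 0$, $${}_3F_2\!\left(\begin{matrix}-2n,\,-2n-1,\,\tfrac12\\ -2n+\tfrac12,\,2\end{matrix};1\right)=\frac{(2n+1)!\,(2n)!^3}{(4n)!\,n!^3\,(n+1)!},$$ and $${}_3F_2\!\left(\begin{matrix}-2n-1,\,-2n-2,\,\tfrac12\\ -2n-\tfrac12,\,2\end{matrix};1\right)=0.$$
   Context: ${}_3F_2\!\left(\begin{matrix}a_1,a_2,a_3\\ b_1,b_2\end{matrix};z\right)=\sum_{j\ge0}\frac{(a_1)_j(a_2)_j(a_3)_j}{(b_1)_j(b_2)_j}\frac{z^j}{j!}$, where $(x)_j=x(x+1)\cdots(x+j-1)$ is the Pochhammer symbol; when $a_1=-m$ is a nonpositive integer the series terminates at $j=m$. *)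

theory Defs
  imports Complex_Main
begin

text \<open>Terminating generalized hypergeometric series 3F2 with first numerator
parameter -m (m a natural number): the series terminates at j = m.\<close>
definition hyp3F2_term :: "nat \<Rightarrow> real \<Rightarrow> real \<Rightarrow> real \<Rightarrow> real \<Rightarrow> real \<Rightarrow> real" where
  "hyp3F2_term m a2 a3 b1 b2 z =
     (\<Sum>j=0..m. pochhammer (- real m) j * pochhammer a2 j * pochhammer a3 j
                / (pochhammer b1 j * pochhammer b2 j) * z ^ j / fact j)"

end

theory Submission
  imports Defs
begin

text \<open>
  Write \<open>S m\<close> for the series with parameters \<open>-m, -m-1, 1/2; 1/2-m, 2\<close>, so that the two sums
  of the theorem are \<open>S (2n)\<close> and \<open>S (2n+1)\<close>. Zeilberger's algorithm yields a rational function
  \<open>R\<close> such that, with \<open>G(m,j) = F(m+2,j) R(m,j)\<close>, the summand \<open>F\<close> satisfies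
  \<open>4(m+1)\<^sup>2(m+3) F(m,j) - (m+4)(2m+1)(2m+3) F(m+2,j) = G(m,j+1) - G(m,j)\<close>;
  verifying this reduces to a polynomial identity. Summing over \<open>j\<close> telescopes to the two-step
  recurrence \<open>(m+4)(2m+1)(2m+3) S(m+2) = 4(m+1)\<^sup>2(m+3) S(m)\<close>. Since \<open>S 1 = 0\<close>, all odd values
  vanish; since \<open>S 0 = 1\<close> and the factorial quotient satisfies the same recurrence in steps
  of two, the even values are given by it.
\<close>

definition hyp3F2_coeff :: "real \<Rightarrow> real \<Rightarrow> real \<Rightarrow> real \<Rightarrow> real \<Rightarrow> nat \<Rightarrow> real" where
  "hyp3F2_coeff a1 a2 a3 b1 b2 j =
     pochhammer a1 j * pochhammer a2 j * pochhammer a3 j / (pochhammer b1 j * pochhammer b2 j * fact j)"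

lemma hyp3F2_coeff_Suc:
  "hyp3F2_coeff a1 a2 a3 b1 b2 (Suc j) = hyp3F2_coeff a1 a2 a3 b1 b2 j *
     ((a1 + j) * (a2 + j) * (a3 + j) / ((b1 + j) * (b2 + j) * (j + 1)))"
  unfolding hyp3F2_coeff_def by (simp add: pochhammer_Suc field_simps)

lemma hyp3F2_term_at_1:
  "hyp3F2_term m a2 a3 b1 b2 1 = (\<Sum>j=0..m. hyp3F2_coeff (- real m) a2 a3 b1 b2 j)"
  unfolding hyp3F2_term_def hyp3F2_coeff_def by simp

lemma hyp3F2_coeff_eq_0:
  "m < j \<Longrightarrow> hyp3F2_coeff (- real m) a2 a3 b1 b2 j = 0"
  unfolding hyp3F2_coeff_def by (simp add: pochhammer_of_nat_eq_0_lemma)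

lemma pochhammer_add2:
  fixes a :: "'a :: field"
  assumes "a \<noteq> 0" "a + 1 \<noteq> 0"
  shows "pochhammer (a + 2) j = pochhammer a j * (a + of_nat j) * (a + 1 + of_nat j) / (a * (a + 1))"
proof -
  have "a * (a + 1) * pochhammer (a + 2) j = pochhammer a (Suc (Suc j))"
    by (simp only: pochhammer_rec) (simp add: add.assoc one_add_one)
  also have "\<dots> = pochhammer a j * (a + of_nat j) * (a + 1 + of_nat j)"
    by (simp only: pochhammer_Suc) (simp add: algebra_simps)
  finally show ?thesis using assms by (simp add: eq_divide_eq ac_simps)
qed

lemma two_nat_diff_ne_odd:
  assumes "odd k"
  shows "2 * real j - 2 * real m \<noteq> of_int k"
proof
  assume "2 * real j - 2 * real m = of_int k"
  then have "of_int (2 * (int j - int m)) = (of_int k :: real)" by simp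
  then have "2 * (int j - int m) = k" by (simp only: of_int_eq_iff)
  with assms show False by presburger
qed

definition F :: "nat \<Rightarrow> nat \<Rightarrow> real" where
  "F m j = hyp3F2_coeff (- real m) (- real m - 1) (1/2) (1/2 - real m) 2 j"

definition F_Suc_ratio :: "real \<Rightarrow> real \<Rightarrow> real" where
  "F_Suc_ratio x y = (y - x) * (y - x - 1) * (y + 1/2) / ((y - x + 1/2) * (y + 2) * (y + 1))"

definition F_shift_ratio :: "real \<Rightarrow> real \<Rightarrow> real" where
  "F_shift_ratio x y = (x + 1 - y) * (x + 2 - y)^2 * (x + 3 - y) * (2 * x + 1) * (2 * x + 3)
     / ((x + 1) * (x + 2)^2 * (x + 3) * (2 * x + 1 - 2 * y) * (2 * x + 3 - 2 * y))"

lemma F_Suc: "F m (Suc j) = F m j * F_Suc_ratio (real m) (real j)"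
  unfolding F_def hyp3F2_coeff_Suc F_Suc_ratio_def by (simp add: algebra_simps)

lemma F_shift2: "F m j = F (m + 2) j * F_shift_ratio (real m) (real j)"
proof -
  define x where "x = real m"
  have x: "x \<ge> 0" unfolding x_def by simp
  have "2 * real j - 2 * real m \<noteq> of_int 1" "2 * real j - 2 * real m \<noteq> of_int 3"
    by (rule two_nat_diff_ne_odd; simp)+
  then have d: "2 * x + 1 - 2 * real j \<noteq> 0" "2 * x + 3 - 2 * real j \<noteq> 0"
    unfolding x_def by auto
  have "- x = (- x - 2) + 2" "- x - 1 = (- x - 2) + 1" by simp_all
  then have p0: "pochhammer (- x) j
      = pochhammer (- x - 2) j * (- x - 2 + j) * (- x - 1 + j) / ((- x - 2) * (- x - 1))"
    using pochhammer_add2[of "- x - 2" j] x by (simp only:)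
  have "- x - 1 = (- x - 3) + 2" "- x - 2 = (- x - 3) + 1" by simp_all
  then have p1: "pochhammer (- x - 1) j
      = pochhammer (- x - 3) j * (- x - 3 + j) * (- x - 2 + j) / ((- x - 3) * (- x - 2))"
    using pochhammer_add2[of "- x - 3" j] x by (simp only:)
  have "1/2 - x = (- 3/2 - x) + 2" "- 1/2 - x = (- 3/2 - x) + 1" by simp_all
  then have q: "pochhammer (1/2 - x) j
      = pochhammer (- 3/2 - x) j * (- 3/2 - x + j) * (- 1/2 - x + j) / ((- 3/2 - x) * (- 1/2 - x))"
    using pochhammer_add2[of "- 3/2 - x" j] x by (simp only:)
  have Fm: "F m j = pochhammer (- x) j * pochhammer (- x - 1) j * pochhammer (1/2) j
      / (pochhammer (1/2 - x) j * pochhammer 2 j * fact j)"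
    unfolding F_def hyp3F2_coeff_def x_def ..
  have "- real (m + 2) = - x - 2" "- real (m + 2) - 1 = - x - 3" "1/2 - real (m + 2) = - 3/2 - x"
    unfolding x_def by simp_all
  then have Fm2: "F (m + 2) j = pochhammer (- x - 2) j * pochhammer (- x - 3) j * pochhammer (1/2) j
      / (pochhammer (- 3/2 - x) j * pochhammer 2 j * fact j)"
    unfolding F_def hyp3F2_coeff_def by (simp only:)
  show ?thesis
    unfolding Fm Fm2 p0 p1 q F_shift_ratio_def x_def[symmetric]
    using d x by (simp add: divide_simps) (simp add: algebra_simps power2_eq_square)
qed

text \<open>The certificate produced by Zeilberger's algorithm for the summand \<open>F\<close>.\<close>

definition wz_poly :: "real \<Rightarrow> real \<Rightarrow> real" where
  "wz_poly x y = 12*y - 26*y^2 - 8*y^3 + 26*y^4 - 4*y^5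
   + x*(68*y - 82*y^2 - 74*y^3 + 68*y^4 - 8*y^5)
   + x^2*(141*y - 59*y^2 - 138*y^3 + 58*y^4 - 4*y^5)
   + x^3*(131*y + 23*y^2 - 92*y^3 + 16*y^4)
   + x^4*(54*y + 34*y^2 - 20*y^3) + x^5*(8*y + 8*y^2)"

definition wz_cert :: "real \<Rightarrow> real \<Rightarrow> real" where
  "wz_cert x y = wz_poly x y * (2*x + 1) * (2*x + 3)
     / ((x + 1) * (x + 2)^2 * (x + 3) * (2*y - 2*x - 1) * (2*y - 2*x - 3))"

lemma wz_cert_identity:
  fixes x y :: real
  assumes "x \<ge> 0" "y \<ge> 0" "2*y - 2*x - 1 \<noteq> 0" "2*y - 2*x - 3 \<noteq> 0" "2*y - 2*x + 1 \<noteq> 0"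
  shows "4 * (x + 1)^2 * (x + 3) * F_shift_ratio x y - (x + 4) * (2 * x + 1) * (2 * x + 3)
    = F_Suc_ratio (x + 2) y * wz_cert x (y + 1) - wz_cert x y"
proof -
  have "x + 1 \<noteq> 0" "x + 2 \<noteq> 0" "x + 3 \<noteq> 0" "y + 1 \<noteq> 0" "y + 2 \<noteq> 0"
    using assms(1,2) by linarith+
  moreover have "2 * x + 1 - 2 * y \<noteq> 0" "2 * x + 3 - 2 * y \<noteq> 0" "2 * (y + 1) - 2 * x - 3 \<noteq> 0"
    "2 * (y - (x + 2)) + 1 \<noteq> 0"
    using assms(3-5) by (simp_all add: algebra_simps)
  ultimately show ?thesis
    using assms unfolding F_shift_ratio_def F_Suc_ratio_def wz_cert_def wz_poly_def
    by (simp add: divide_simps) algebra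
qed

definition G :: "nat \<Rightarrow> nat \<Rightarrow> real" where
  "G m j = F (m + 2) j * wz_cert (real m) (real j)"

lemma F_telescoping:
  "4 * (real m + 1)^2 * (real m + 3) * F m j
     - (real m + 4) * (2 * real m + 1) * (2 * real m + 3) * F (m + 2) j
   = G m (Suc j) - G m j"
proof -
  define x where "x = real m"
  define y where "y = real j"
  have "x \<ge> 0" "y \<ge> 0" unfolding x_def y_def by simp_all
  moreover have "2 * real j - 2 * real m \<noteq> of_int 1" "2 * real j - 2 * real m \<noteq> of_int 3"
    "2 * real j - 2 * real m \<noteq> of_int (- 1)"
    by (rule two_nat_diff_ne_odd; simp)+
  then have "2*y - 2*x - 1 \<noteq> 0" "2*y - 2*x - 3 \<noteq> 0" "2*y - 2*x + 1 \<noteq> 0"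
    unfolding x_def y_def by auto
  ultimately have cert: "4 * (x + 1)^2 * (x + 3) * F_shift_ratio x y - (x + 4) * (2 * x + 1) * (2 * x + 3)
      = F_Suc_ratio (x + 2) y * wz_cert x (y + 1) - wz_cert x y"
    by (rule wz_cert_identity)
  have "G m (Suc j) = F (m + 2) j * F_Suc_ratio (x + 2) y * wz_cert x (y + 1)"
    unfolding G_def F_Suc x_def y_def by (simp add: add.commute)
  moreover have "G m j = F (m + 2) j * wz_cert x y"
    unfolding G_def x_def y_def ..
  ultimately show ?thesis
    unfolding F_shift2[of m j] x_def[symmetric] y_def[symmetric]
    using arg_cong[OF cert, of "\<lambda>t. F (m + 2) j * t"] by (simp add: algebra_simps)
qed

lemma F_eq_0: "m < j \<Longrightarrow> F m j = 0"
  unfolding F_def by (rule hyp3F2_coeff_eq_0)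

definition S :: "nat \<Rightarrow> real" where
  "S m = (\<Sum>j=0..m. F m j)"

lemma S_eq_sum_up_to:
  assumes "m \<le> k"
  shows "S m = (\<Sum>j=0..k. F m j)"
  unfolding S_def
  by (rule sum.mono_neutral_left) (use assms in \<open>auto simp: F_eq_0\<close>)

lemma S_recurrence:
  "(real m + 4) * (2 * real m + 1) * (2 * real m + 3) * S (m + 2) = 4 * (real m + 1)^2 * (real m + 3) * S m"
proof -
  have "4 * (real m + 1)^2 * (real m + 3) * S m - (real m + 4) * (2 * real m + 1) * (2 * real m + 3) * S (m + 2)
      = (\<Sum>j=0..m+2. 4 * (real m + 1)^2 * (real m + 3) * F m j
            - (real m + 4) * (2 * real m + 1) * (2 * real m + 3) * F (m + 2) j)"
    unfolding S_eq_sum_up_to[OF le_add1, of m 2] S_def[of "m + 2"]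
    by (simp only: sum_distrib_left sum_subtractf)
  also have "\<dots> = (\<Sum>j=0..m+2. G m (Suc j) - G m j)"
    by (simp only: F_telescoping)
  also have "\<dots> = G m (Suc (m + 2)) - G m 0"
    by (subst sum_Suc_diff) simp_all
  also have "\<dots> = 0"
    unfolding G_def wz_cert_def wz_poly_def by (simp add: F_eq_0)
  finally show ?thesis by simp
qed

definition closed_form :: "nat \<Rightarrow> real" where
  "closed_form n = fact (2*n+1) * fact (2*n) ^ 3 / (fact (4*n) * fact n ^ 3 * fact (n+1))"

lemma closed_form_recurrence:
  "(2 * real n + 4) * (4 * real n + 1) * (4 * real n + 3) * closed_form (n + 1)
     = 4 * (2 * real n + 1)^2 * (2 * real n + 3) * closed_form n"
proof -
  have "2 * (n + 1) = Suc (Suc (2 * n))" "2 * (n + 1) + 1 = Suc (Suc (Suc (2 * n)))"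
    "4 * (n + 1) = Suc (Suc (Suc (Suc (4 * n))))" "n + 1 + 1 = Suc (Suc n)" "2 * n + 1 = Suc (2 * n)"
    "n + 1 = Suc n" by simp_all
  then show ?thesis
    unfolding closed_form_def
    by (simp only: fact_Suc) (simp add: divide_simps, algebra)
qed

lemma S_odd: "S (2 * n + 1) = 0"
proof (induction n)
  case 0
  show ?case unfolding S_def F_def hyp3F2_coeff_def by simp
next
  case (Suc n)
  have "(real (2*n+1) + 4) * (2 * real (2*n+1) + 1) * (2 * real (2*n+1) + 3) * S (2 * Suc n + 1) = 0"
    using S_recurrence[of "2 * n + 1"] Suc.IH by (simp add: algebra_simps)
  then show ?case by simp
qed

lemma S_even: "S (2 * n) = closed_form n"
proof (induction n)
  case 0
  show ?case unfolding S_def F_def hyp3F2_coeff_def closed_form_def by simp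
next
  case (Suc n)
  have "(2 * real n + 4) * (4 * real n + 1) * (4 * real n + 3) * S (2 * n + 2)
      = 4 * (2 * real n + 1)^2 * (2 * real n + 3) * S (2 * n)"
    using S_recurrence[of "2 * n"] by (simp add: algebra_simps)
  then have "(2 * real n + 4) * (4 * real n + 1) * (4 * real n + 3) * S (2 * Suc n)
      = (2 * real n + 4) * (4 * real n + 1) * (4 * real n + 3) * closed_form (Suc n)"
    using closed_form_recurrence[of n] Suc.IH by simp
  then show ?case by (simp del: of_nat_Suc)
qed

theorem mainTheorem8:
  fixes n :: nat
  shows "hyp3F2_term (2*n) (- 2 * real n - 1) (1/2) (- 2 * real n + 1/2) 2 1
           = fact (2*n+1) * fact (2*n) ^ 3 / (fact (4*n) * fact n ^ 3 * fact (n+1)) \<and>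
         hyp3F2_term (2*n+1) (- 2 * real n - 2) (1/2) (- 2 * real n - 1/2) 2 1 = 0"
proof
  have "hyp3F2_term (2*n) (- 2 * real n - 1) (1/2) (- 2 * real n + 1/2) 2 1 = S (2 * n)"
    unfolding hyp3F2_term_at_1 S_def F_def by simp
  then show "hyp3F2_term (2*n) (- 2 * real n - 1) (1/2) (- 2 * real n + 1/2) 2 1
           = fact (2*n+1) * fact (2*n) ^ 3 / (fact (4*n) * fact n ^ 3 * fact (n+1))"
    unfolding S_even closed_form_def .
  have "- 2 * real n - 2 = - real (2*n+1) - 1" "- 2 * real n - 1/2 = 1/2 - real (2*n+1)"
    by simp_all
  then have "hyp3F2_term (2*n+1) (- 2 * real n - 2) (1/2) (- 2 * real n - 1/2) 2 1 = S (2 * n + 1)"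
    unfolding hyp3F2_term_at_1 S_def F_def by (simp only:)
  then show "hyp3F2_term (2*n+1) (- 2 * real n - 2) (1/2) (- 2 * real n - 1/2) 2 1 = 0"
    unfolding S_odd .
qed

end
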